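(* Let $\Sigma$ be an alphabet, $n\ge1$, and let $p(x)\in\mathrm{GF}(2)[x]$ be an irreducible polynomial of degree $L\ge n$. Let $h_1:\Sigma\to\mathrm{GF}(2)[x]/p(x)$ be a random function whose values $h_1(c)$, $c\in\Sigma$, are mutually independent and uniformly distributed on the field $\mathrm{GF}(2)[x]/p(x)$ (which has $2^L$ elements). Define $h(a_1,\dots,a_n)=h_1(a_1)x^{n-1}+h_1(a_2)x^{n-2}+\cdots+h_1(a_n)$ computed in $\mathrm{GF}(2)[x]/p(x)$. Then $h$ is pairwise independent: for all distinct $a,a'\in\Sigma^n$ and all $y,y'\in\mathrm{GF}(2)[x]/p(x)$, $P(h(a)=y\wedge h(a')=y')=4^{-L}$.
   Context: This hash family is called General. Elements of $\mathrm{GF}(2)[x]/p(x)$ are identified with polynomials of degree at most $L-1$ over $\mathrm{GF}(2)$, equivalently with $L$-bit integers. *)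

theory Defs
  imports "HOL-Probability.Probability" "HOL-Library.Z2" "HOL-Computational_Algebra.Polynomial"
begin

text \<open>GF(2) is the type bit (HOL-Library.Z2); GF(2)[x] is bit poly.
  The field GF(2)[x]/p(x) is represented by the residues: polynomials of degree < deg p,
  with arithmetic modulo p.\<close>

definition GF2_field :: "bit poly \<Rightarrow> bit poly set" where
  "GF2_field p = {q. degree q < degree p}"

definition general_hash :: "bit poly \<Rightarrow> ('a \<Rightarrow> bit poly) \<Rightarrow> 'a list \<Rightarrow> bit poly" where
  "general_hash p h1 a =
     (\<Sum>i<length a. h1 (a ! i) * [:0, 1:] ^ (length a - 1 - i)) mod p"

end

theory Submission
  imports Defs "HOL-Computational_Algebra.Polynomial_Factorial"
begin

(* For a word a of length n and a letter c let pos_poly a c be the polynomial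
   sum of x^(n-1-i) over the positions i with a!i = c.  The hash is linear in
   the random table:  h(a) = (sum over c of h1(c) * pos_poly a c) mod p.

   1. Since sum over c of pos_poly a c is the all-ones polynomial 1 + x + ... + x^(n-1),
      which has degree < deg p and is not divisible by p, distinct words a, a'
      admit two letters c, d whose 2x2 determinant
        pos_poly a c * pos_poly a' d - pos_poly a d * pos_poly a' c
      is nonzero modulo the irreducible p  (nonsingular_letter_pair).
   2. Fixing the table outside {c, d}, the values (h1 c, h1 d) enter the pair
      (h(a), h(a')) through this invertible matrix, so each target (y, y') is hit
      by exactly one pair of residues  (two_letter_update_unique).
   3. Counting tables with a unique free pair of coordinates
      (card_PiE_dflt_unique_pair) gives probability |F|^(|S|-2) / |F|^|S| = 4^(-L). *)

(* GF(2) is a field, hence trivially a Euclidean ring; these instances (the same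
   as those for real, rat, complex in Field_as_Ring) make GF(2)[x] a factorial
   ring, so that irreducible polynomials are prime. *)

instantiation bit :: "{unique_euclidean_ring, normalization_euclidean_semiring,
                       normalization_semidom_multiplicative}"
begin
definition unit_factor_bit :: "bit \<Rightarrow> bit" where [simp]: "unit_factor_bit x = x"
definition normalize_bit :: "bit \<Rightarrow> bit" where [simp]: "normalize_bit x = x"
definition euclidean_size_bit :: "bit \<Rightarrow> nat" where
  [simp]: "euclidean_size_bit x = (if x = 0 then 0 else 1)"
definition division_segment_bit :: "bit \<Rightarrow> bit" where [simp]: "division_segment_bit x = 1"
instance
  by standard (auto simp: bit_not_zero_iff modulo_bit_unfold)
end

instantiation bit :: euclidean_ring_gcd
begin
definition gcd_bit :: "bit \<Rightarrow> bit \<Rightarrow> bit" where "gcd_bit = Euclidean_Algorithm.gcd"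
definition lcm_bit :: "bit \<Rightarrow> bit \<Rightarrow> bit" where "lcm_bit = Euclidean_Algorithm.lcm"
definition Gcd_bit :: "bit set \<Rightarrow> bit" where "Gcd_bit = Euclidean_Algorithm.Gcd"
definition Lcm_bit :: "bit set \<Rightarrow> bit" where "Lcm_bit = Euclidean_Algorithm.Lcm"
instance by standard (simp_all add: gcd_bit_def lcm_bit_def Gcd_bit_def Lcm_bit_def)
end

instance bit :: field_gcd ..


lemma dvd_small_degree_eq_0:
  fixes p q :: "'a::{comm_semiring_1,semiring_no_zero_divisors} poly"
  assumes "p dvd q" and "degree q < degree p"
  shows "q = 0"
  using dvd_imp_degree_le[OF assms(1)] assms(2) by fastforce

lemma residues_eq_if_dvd_diff:
  assumes "u \<in> GF2_field p" and "v \<in> GF2_field p" and "p dvd (u - v)"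
  shows "u = v"
proof -
  have "degree (u - v) < degree p"
    using degree_diff_le_max[of u v] assms(1,2) by (auto simp: GF2_field_def)
  then show ?thesis using dvd_small_degree_eq_0[OF assms(3)] by simp
qed

lemma GF2_field_eq_Poly_image:
  assumes "degree p > 0"
  shows "GF2_field p = Poly ` {xs. length xs = degree p}"
proof (intro equalityI subsetI)
  fix q assume "q \<in> GF2_field p"
  then have "length (coeffs q) \<le> degree p"
    by (cases "q = 0") (auto simp: GF2_field_def length_coeffs)
  then have "length (coeffs q @ replicate (degree p - length (coeffs q)) 0) = degree p"
    by simp
  then show "q \<in> Poly ` {xs. length xs = degree p}"
    by (intro rev_image_eqI[of "coeffs q @ replicate (degree p - length (coeffs q)) 0"]) auto
next
  fix q :: "bit poly" assume "q \<in> Poly ` {xs. length xs = degree p}"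
  then obtain xs where q: "q = Poly xs" and len: "length xs = degree p" by auto
  have "degree q \<le> degree p - 1"
    by (rule degree_le) (auto simp: q nth_default_def len)
  then show "q \<in> GF2_field p" using assms by (auto simp: GF2_field_def)
qed

lemma finite_card_GF2_field:
  assumes "degree p > 0"
  shows "finite (GF2_field p)" and "card (GF2_field p) = 2 ^ degree p"
proof -
  have UNIV_bit: "(UNIV :: bit set) = {0, 1}" by (auto intro: bit.exhaust)
  have fin_bit: "finite (UNIV :: bit set)" by (simp add: UNIV_bit)
  have card_bit: "CARD(bit) = 2" by (simp add: UNIV_bit)
  have inj: "inj_on Poly {xs :: bit list. length xs = degree p}"
  proof (rule inj_onI)
    fix xs ys :: "bit list"
    assume "xs \<in> {xs. length xs = degree p}" "ys \<in> {xs. length xs = degree p}"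
      and "Poly xs = Poly ys"
    then show "xs = ys"
      by (metis (mono_tags, lifting) coeff_Poly_eq mem_Collect_eq nth_default_nth nth_equalityI)
  qed
  have "card (GF2_field p) = card {xs :: bit list. length xs = degree p}"
    unfolding GF2_field_eq_Poly_image[OF assms] by (rule card_image[OF inj])
  then show "card (GF2_field p) = 2 ^ degree p"
    using card_lists_length_eq[OF fin_bit, of "degree p"] card_bit by simp
  show "finite (GF2_field p)"
    unfolding GF2_field_eq_Poly_image[OF assms]
    using finite_lists_length_eq[OF fin_bit, of "degree p"] by simp
qed

lemma general_hash_in_GF2_field:
  assumes "degree p > 0"
  shows "general_hash p h1 a \<in> GF2_field p"
proof -
  have "p \<noteq> 0" using assms by auto
  then have "degree (x mod p) < degree p" for x
    using degree_mod_less[of p x] assms by (cases "x mod p = 0") auto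
  then show ?thesis by (simp add: general_hash_def GF2_field_def)
qed


definition pos_poly :: "'a list \<Rightarrow> 'a \<Rightarrow> 'b::comm_semiring_1 poly" where
  "pos_poly a c = (\<Sum>i<length a. monom (if a ! i = c then 1 else 0) (length a - 1 - i))"

definition ones_poly :: "nat \<Rightarrow> 'b::comm_semiring_1 poly" where
  "ones_poly n = (\<Sum>i<n. monom 1 (n - 1 - i))"

lemma degree_pos_poly: "degree (pos_poly a c :: 'b::comm_semiring_1 poly) \<le> length a - 1"
  unfolding pos_poly_def by (rule degree_sum_le) (auto intro: order.trans[OF degree_monom_le])

lemma coeff_pos_poly:
  assumes "i < length a"
  shows "coeff (pos_poly a c :: 'b::comm_semiring_1 poly) (length a - 1 - i)
         = (if a ! i = c then 1 else 0)"
proof -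
  have "coeff (pos_poly a c) (length a - 1 - i) =
        (\<Sum>j<length a. if j = i then (if a ! j = c then 1 else 0) else 0)"
    unfolding pos_poly_def coeff_sum coeff_monom by (rule sum.cong) (use assms in auto)
  then show ?thesis using assms by simp
qed

lemma word_eq_if_pos_polys_eq:
  fixes a a' :: "'a list"
  assumes "length a = length a'" and "set a \<subseteq> S"
    and "\<And>c. c \<in> S \<Longrightarrow> (pos_poly a c :: 'b::comm_semiring_1 poly) = pos_poly a' c"
  shows "a = a'"
proof (rule nth_equalityI[OF assms(1)])
  fix i assume i: "i < length a"
  then have "(pos_poly a (a ! i) :: 'b poly) = pos_poly a' (a ! i)"
    using assms(2,3) by (meson nth_mem subsetD)
  moreover have "coeff (pos_poly a (a ! i) :: 'b poly) (length a - 1 - i) = 1"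
    using coeff_pos_poly[where 'b='b, OF i] by simp
  moreover have "coeff (pos_poly a' (a ! i) :: 'b poly) (length a - 1 - i)
               = (if a' ! i = a ! i then 1 else 0)"
    using coeff_pos_poly[where 'b='b, of i a'] i assms(1) by simp
  ultimately show "a ! i = a' ! i" by (metis zero_neq_one)
qed

(* Every position carries exactly one letter, so the position polynomials of a
   word over S add up to the all-ones polynomial. *)
lemma sum_pos_poly:
  assumes "finite S" and "set a \<subseteq> S"
  shows "(\<Sum>c\<in>S. pos_poly a c :: 'b::comm_semiring_1 poly) = ones_poly (length a)"
proof -
  have "(\<Sum>c\<in>S. pos_poly a c) =
        (\<Sum>i<length a. \<Sum>c\<in>S. if a ! i = c then monom 1 (length a - 1 - i) else 0)"
    unfolding pos_poly_def by (subst sum.swap) (intro sum.cong; simp)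
  also have "\<dots> = ones_poly (length a)"
    unfolding ones_poly_def using assms by (intro sum.cong) (auto simp: subset_iff)
  finally show ?thesis .
qed

(* 1 + x + ... + x^(n-1) is a nonzero polynomial of degree n - 1, hence not a
   multiple of any polynomial of degree >= n. *)
lemma ones_poly_not_dvd:
  fixes p :: "'b::{comm_semiring_1,semiring_no_zero_divisors} poly"
  assumes "n \<ge> 1" and "degree p \<ge> n"
  shows "\<not> p dvd ones_poly n"
proof
  assume dvd: "p dvd ones_poly n"
  have "coeff (ones_poly n :: 'b poly) 0 = (\<Sum>j<n. if j = n - 1 then 1 else 0)"
    unfolding ones_poly_def coeff_sum coeff_monom by (rule sum.cong) auto
  then have "coeff (ones_poly n :: 'b poly) 0 = 1" using assms(1) by simp
  moreover have "degree (ones_poly n :: 'b poly) < degree p"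
  proof -
    have "degree (ones_poly n :: 'b poly) \<le> n - 1"
      unfolding ones_poly_def
      by (rule degree_sum_le) (auto intro: order.trans[OF degree_monom_le])
    then show ?thesis using assms by linarith
  qed
  ultimately show False using dvd_small_degree_eq_0[OF dvd] by simp
qed


(* Step 1: two distinct words of equal length n <= deg p have a pair of letters
   whose position polynomials form a matrix that is invertible modulo p.
   If all 2x2 minors vanished mod p, summing the minors over d would give
   p | ones_poly n * (pos_poly a c - pos_poly a' c), forcing a = a'. *)
lemma nonsingular_letter_pair:
  fixes p :: "bit poly" and a a' :: "'a list"
  assumes prime: "prime_elem p" and deg: "degree p \<ge> length a"
    and len: "length a' = length a" and ne: "a \<noteq> a'" and n1: "length a \<ge> 1"
    and fin: "finite S" and sa: "set a \<subseteq> S" and sa': "set a' \<subseteq> S"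
  shows "\<exists>c\<in>S. \<exists>d\<in>S. \<not> p dvd (pos_poly a c * pos_poly a' d - pos_poly a d * pos_poly a' c)"
proof (rule ccontr)
  assume "\<not> ?thesis"
  then have minors: "p dvd (pos_poly a c * pos_poly a' d - pos_poly a d * pos_poly a' c)"
    if "c \<in> S" "d \<in> S" for c d
    using that by blast
  have ones: "\<not> p dvd ones_poly (length a)" by (rule ones_poly_not_dvd[OF n1 deg])
  have "(pos_poly a c :: bit poly) = pos_poly a' c" if c: "c \<in> S" for c
  proof (rule residues_eq_if_dvd_diff)
    have "p dvd (\<Sum>d\<in>S. pos_poly a c * pos_poly a' d - pos_poly a d * pos_poly a' c)"
      using minors c by (intro dvd_sum) blast
    also have "\<dots> = pos_poly a c * (\<Sum>d\<in>S. pos_poly a' d) - (\<Sum>d\<in>S. pos_poly a d) * pos_poly a' c"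
      by (simp add: sum_subtractf sum_distrib_left sum_distrib_right)
    also have "\<dots> = ones_poly (length a) * (pos_poly a c - pos_poly a' c)"
      using sum_pos_poly[where 'b=bit, OF fin sa] sum_pos_poly[where 'b=bit, OF fin sa'] len
      by (simp add: algebra_simps)
    finally show "p dvd (pos_poly a c - pos_poly a' c)"
      using prime ones prime_elem_dvd_mult_iff by blast
    show "pos_poly a c \<in> GF2_field p" "pos_poly a' c \<in> GF2_field p"
      using degree_pos_poly[where 'b=bit, of a c] degree_pos_poly[where 'b=bit, of a' c]
        len n1 deg
      by (auto simp: GF2_field_def)
  qed
  then have "a = a'" using word_eq_if_pos_polys_eq[OF len[symmetric] sa] by blast
  with ne show False ..
qed


lemma hash_sum_update_diff:
  fixes r :: "'a \<Rightarrow> 'b::comm_ring_1 poly"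
  assumes "c \<noteq> d"
  shows "(\<Sum>i<length a. (r(c := u, d := v)) (a ! i) * [:0, 1:] ^ (length a - 1 - i))
       - (\<Sum>i<length a. (r(c := u', d := v')) (a ! i) * [:0, 1:] ^ (length a - 1 - i))
       = (u - u') * pos_poly a c + (v - v') * pos_poly a d"
proof -
  have "(\<Sum>i<length a. (r(c := u, d := v)) (a ! i) * [:0, 1:] ^ (length a - 1 - i))
      - (\<Sum>i<length a. (r(c := u', d := v')) (a ! i) * [:0, 1:] ^ (length a - 1 - i))
      = (\<Sum>i<length a. (u - u') * monom (if a ! i = c then 1 else 0) (length a - 1 - i)
                     + (v - v') * monom (if a ! i = d then 1 else 0) (length a - 1 - i))"
    unfolding sum_subtractf[symmetric]
    by (rule sum.cong) (use assms in \<open>auto simp: monom_altdef algebra_simps\<close>)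
  also have "\<dots> = (u - u') * pos_poly a c + (v - v') * pos_poly a d"
    unfolding pos_poly_def sum.distrib sum_distrib_left ..
  finally show ?thesis .
qed

(* Step 2a: with the rest of the table fixed, the residues (h1 c, h1 d) are
   recovered from the hash pair, by Cramer's rule modulo the prime p. *)
lemma two_letter_update_injective:
  fixes p :: "bit poly" and r :: "'a \<Rightarrow> bit poly" and a a' :: "'a list" and c d :: 'a
  defines "D \<equiv> pos_poly a c * pos_poly a' d - pos_poly a d * pos_poly a' c"
  assumes prime: "prime_elem p" and nonsing: "\<not> p dvd D" and cd: "c \<noteq> d"
    and res: "u \<in> GF2_field p" "v \<in> GF2_field p" "u' \<in> GF2_field p" "v' \<in> GF2_field p"
    and eq1: "general_hash p (r(c := u, d := v)) a = general_hash p (r(c := u', d := v')) a"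
    and eq2: "general_hash p (r(c := u, d := v)) a' = general_hash p (r(c := u', d := v')) a'"
  shows "u = u'" and "v = v'"
proof -
  have E1: "p dvd (u - u') * pos_poly a c + (v - v') * pos_poly a d"
    using eq1 unfolding general_hash_def mod_eq_dvd_iff hash_sum_update_diff[OF cd] .
  have E2: "p dvd (u - u') * pos_poly a' c + (v - v') * pos_poly a' d"
    using eq2 unfolding general_hash_def mod_eq_dvd_iff hash_sum_update_diff[OF cd] .
  have "(u - u') * D = pos_poly a' d * ((u - u') * pos_poly a c + (v - v') * pos_poly a d)
                     - pos_poly a d * ((u - u') * pos_poly a' c + (v - v') * pos_poly a' d)"
    unfolding D_def by (simp add: algebra_simps)
  then have "p dvd (u - u') * D" using E1 E2 by (metis dvd_diff dvd_mult)
  then have "p dvd (u - u')" using prime nonsing prime_elem_dvd_mult_iff by blast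
  then show "u = u'" using residues_eq_if_dvd_diff res by blast
  have "(v - v') * D = pos_poly a c * ((u - u') * pos_poly a' c + (v - v') * pos_poly a' d)
                     - pos_poly a' c * ((u - u') * pos_poly a c + (v - v') * pos_poly a d)"
    unfolding D_def by (simp add: algebra_simps)
  then have "p dvd (v - v') * D" using E1 E2 by (metis dvd_diff dvd_mult)
  then have "p dvd (v - v')" using prime nonsing prime_elem_dvd_mult_iff by blast
  then show "v = v'" using residues_eq_if_dvd_diff res by blast
qed

(* Step 2b: an injective self-map of the finite set F x F is bijective, so every
   target pair of residues has exactly one preimage. *)
lemma two_letter_update_unique:
  fixes p :: "bit poly" and r :: "'a \<Rightarrow> bit poly"
  assumes prime: "prime_elem p"
    and nonsing: "\<not> p dvd (pos_poly a c * pos_poly a' d - pos_poly a d * pos_poly a' c)"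
    and cd: "c \<noteq> d" and dp: "degree p > 0"
    and y: "y \<in> GF2_field p" "y' \<in> GF2_field p"
  shows "card {uv \<in> GF2_field p \<times> GF2_field p.
                 general_hash p (r(c := fst uv, d := snd uv)) a = y
               \<and> general_hash p (r(c := fst uv, d := snd uv)) a' = y'} = 1"
proof -
  let ?F = "GF2_field p"
  define \<Psi> where "\<Psi> uv = (general_hash p (r(c := fst uv, d := snd uv)) a,
                          general_hash p (r(c := fst uv, d := snd uv)) a')" for uv
  have inj: "inj_on \<Psi> (?F \<times> ?F)"
  proof (rule inj_onI)
    fix uv uv' assume "uv \<in> ?F \<times> ?F" "uv' \<in> ?F \<times> ?F" "\<Psi> uv = \<Psi> uv'"
    then have "fst uv = fst uv' \<and> snd uv = snd uv'"
      using two_letter_update_injective[OF prime nonsing cd,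
                                        of "fst uv" "snd uv" "fst uv'" "snd uv'" r]
      by (auto simp: \<Psi>_def)
    then show "uv = uv'" by (simp add: prod_eq_iff)
  qed
  have "\<Psi> ` (?F \<times> ?F) = ?F \<times> ?F"
  proof (rule endo_inj_surj[OF _ _ inj])
    show "finite (?F \<times> ?F)" using finite_card_GF2_field(1)[OF dp] by simp
    show "\<Psi> ` (?F \<times> ?F) \<subseteq> ?F \<times> ?F"
      using general_hash_in_GF2_field[OF dp] by (auto simp: \<Psi>_def)
  qed
  then have "(y, y') \<in> \<Psi> ` (?F \<times> ?F)" using y by simp
  then obtain uv0 where uv0: "uv0 \<in> ?F \<times> ?F" and "(y, y') = \<Psi> uv0" by (rule imageE)
  then have uv0_val: "\<Psi> uv0 = (y, y')" by simp
  have "uv = uv0" if "uv \<in> ?F \<times> ?F" "\<Psi> uv = (y, y')" for uv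
    using inj_onD[OF inj, of uv uv0] that uv0 uv0_val by simp
  then have "{uv \<in> ?F \<times> ?F. \<Psi> uv = (y, y')} = {uv0}" using uv0 uv0_val by blast
  moreover have "{uv \<in> ?F \<times> ?F. \<Psi> uv = (y, y')}
      = {uv \<in> ?F \<times> ?F. general_hash p (r(c := fst uv, d := snd uv)) a = y
                          \<and> general_hash p (r(c := fst uv, d := snd uv)) a' = y'}"
    by (simp add: \<Psi>_def)
  ultimately show ?thesis by simp
qed


lemma card_PiE_dflt_unique_pair:
  assumes fin: "finite S" "finite F" and cd: "c \<in> S" "d \<in> S" "c \<noteq> d"
    and unique: "\<And>r. r \<in> PiE_dflt (S - {c, d}) dflt (\<lambda>_. F) \<Longrightarrow>
                   card {uv \<in> F \<times> F. P (r(c := fst uv, d := snd uv))} = 1"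
  shows "card (PiE_dflt S dflt (\<lambda>_. F) \<inter> {h. P h}) = card F ^ (card S - 2)"
proof -
  define R where "R = PiE_dflt (S - {c, d}) dflt (\<lambda>_. F)"
  define fib where "fib r = {uv \<in> F \<times> F. P (r(c := fst uv, d := snd uv))}" for r
  (* a function on S is a function on S - {c, d} together with its values at c, d *)
  let ?glue = "\<lambda>(r, uv). r(c := fst uv, d := snd uv)"
  let ?split = "\<lambda>h. (h(c := dflt, d := dflt), (h c, h d))"
  have "bij_betw ?glue (Sigma R fib) (PiE_dflt S dflt (\<lambda>_. F) \<inter> {h. P h})"
  proof (rule bij_betwI[where g = ?split])
    show "?glue \<in> Sigma R fib \<rightarrow> PiE_dflt S dflt (\<lambda>_. F) \<inter> {h. P h}"
      using cd by (auto simp: R_def fib_def PiE_dflt_def)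
    show "?split \<in> PiE_dflt S dflt (\<lambda>_. F) \<inter> {h. P h} \<rightarrow> Sigma R fib"
      using cd by (auto simp: R_def fib_def PiE_dflt_def)
    show "?split (?glue x) = x" if "x \<in> Sigma R fib" for x
      using that cd by (auto simp: R_def PiE_dflt_def fun_eq_iff)
    show "?glue (?split h) = h" for h
      by simp
  qed
  then have "card (PiE_dflt S dflt (\<lambda>_. F) \<inter> {h. P h}) = card (Sigma R fib)"
    by (simp add: bij_betw_same_card)
  also have "\<dots> = (\<Sum>r\<in>R. card (fib r))"
    using fin by (intro card_SigmaI) (auto simp: R_def fib_def)
  also have "\<dots> = card R" using unique by (simp add: R_def fib_def)
  also have "\<dots> = card F ^ card (S - {c, d})"
    using fin by (simp add: R_def card_PiE_dflt)
  also have "card (S - {c, d}) = card S - 2"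
    using cd fin by (subst card_Diff_subset) auto
  finally show ?thesis .
qed

lemma prob_Pi_pmf_uniform:
  assumes "finite S" "finite F" "F \<noteq> {}"
  shows "measure_pmf.prob (Pi_pmf S dflt (\<lambda>_. pmf_of_set F)) A
         = card (PiE_dflt S dflt (\<lambda>_. F) \<inter> A) / card F ^ card S"
proof -
  have fin: "finite (PiE_dflt S dflt (\<lambda>_. F))" using assms by blast
  have card: "card (PiE_dflt S dflt (\<lambda>_. F)) = card F ^ card S"
    using assms by (simp add: card_PiE_dflt)
  then have "PiE_dflt S dflt (\<lambda>_. F) \<noteq> {}" using assms by auto
  moreover have "Pi_pmf S dflt (\<lambda>_. pmf_of_set F) = pmf_of_set (PiE_dflt S dflt (\<lambda>_. F))"
    using assms by (intro Pi_pmf_of_set) auto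
  ultimately show ?thesis using fin card by (simp add: measure_pmf_of_set)
qed


theorem mainTheorem4:
  fixes \<Sigma> :: "'a set" and n L :: nat and p :: "bit poly" and dflt :: "bit poly"
    and a a' :: "'a list" and y y' :: "bit poly"
  assumes "finite \<Sigma>" and "\<Sigma> \<noteq> {}"
    and "n \<ge> 1"
    and "irreducible p" and "degree p = L" and "L \<ge> n"
    and "length a = n" and "set a \<subseteq> \<Sigma>"
    and "length a' = n" and "set a' \<subseteq> \<Sigma>"
    and "a \<noteq> a'"
    and "y \<in> GF2_field p" and "y' \<in> GF2_field p"
  shows "measure_pmf.prob (Pi_pmf \<Sigma> dflt (\<lambda>_. pmf_of_set (GF2_field p)))
           {h1. general_hash p h1 a = y \<and> general_hash p h1 a' = y'} = 1 / 4 ^ L"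
proof -
  let ?F = "GF2_field p" and ?A = "{h1. general_hash p h1 a = y \<and> general_hash p h1 a' = y'}"
  have dp: "degree p > 0" using assms(3,5,6) by linarith
  have prime: "prime_elem p" using assms(4) by (simp add: prime_elem_iff_irreducible)
  have finF: "finite ?F" and cardF: "card ?F = 2 ^ L" and neF: "?F \<noteq> {}"
    using finite_card_GF2_field[OF dp] assms(12) assms(5) by auto
  obtain c d where cd: "c \<in> \<Sigma>" "d \<in> \<Sigma>"
    and nonsing: "\<not> p dvd (pos_poly a c * pos_poly a' d - pos_poly a d * pos_poly a' c)"
    using nonsingular_letter_pair[OF prime _ _ assms(11) _ assms(1,8,10)] assms(3,5-7,9) by auto
  then have "c \<noteq> d" by auto
  have "card {c, d} \<le> card \<Sigma>" using cd assms(1) by (intro card_mono) auto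
  then obtain k where k: "card \<Sigma> = k + 2"
    using \<open>c \<noteq> d\<close> by (metis card_2_iff le_add_diff_inverse2)
  have "card (PiE_dflt \<Sigma> dflt (\<lambda>_. ?F) \<inter> ?A) = card ?F ^ k"
    using card_PiE_dflt_unique_pair[OF assms(1) finF cd \<open>c \<noteq> d\<close>]
      two_letter_update_unique[OF prime nonsing \<open>c \<noteq> d\<close> dp assms(12,13)] k by auto
  then have "measure_pmf.prob (Pi_pmf \<Sigma> dflt (\<lambda>_. pmf_of_set ?F)) ?A
             = real (card ?F) ^ k / real (card ?F) ^ (k + 2)"
    using prob_Pi_pmf_uniform[OF assms(1) finF neF] k by simp
  also have "\<dots> = 1 / real (card ?F) ^ 2"
    using finF neF by (simp add: power_add power2_eq_square)
  also have "\<dots> = 1 / 4 ^ L"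
    using cardF by (simp add: power2_eq_square power_mult_distrib[symmetric])
  finally show ?thesis .
qed

end
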